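(* Let $\mu,\tau$ be partitions of $s$. There is a bijection between the set of terminal vertices of the tree $\mathscr T(\mu)$ labelled by $(\tau,\tau)$ and the set $\mathrm{SStd}_s(\tau,\mu)$ of semistandard Young tableaux of shape $\tau$ and weight $\mu$.
   Context: A pair of partitions for $s$ is $(\tau^\sharp,\tau)$ with $\tau$ a composition of $s$ and $\tau^\sharp$ a partition with $\tau^\sharp_c\le\tau_c$ for all $c$. For such a pair and $c>1$: $r^m_c(\tau)$ is the composition obtained from $\tau$ by moving the last $m$ boxes of row $c$ to the end of row $c-1$; $a_c(\tau^\sharp)$ is obtained by adding one box at the end of row $c$ of $\tau^\sharp$ if the result is a partition, and otherwise the pair $(a_c(\tau^\sharp),\tau)$ is replaced by the symbol $(\varnothing,\varnothing)$. The rooted tree $\mathscr T(\mu)$ (for $\mu\vdash s$) has vertices labelled by pairs of partitions; labels $(\tau^\sharp,\tau)$ and $(\eta^\sharp,\tau)$ with $\tau^\sharp,\eta^\sharp$ differing only in the first row are identified, and one writes labels with $\tau^\sharp_1=\tau_1$. The root is labelled $((\mu_1),\mu)$. For a vertex labelled $(\tau^\sharp,\tau)\neq(\varnothing,\varnothing)$, if there is a minimal $1<c\le\ell(\mu)$ with $\tau^\sharp_c<\tau_c$ then the vertex has exactly two children, labelled $(\tau^\sharp,r^{\tau_c-\tau^\sharp_c}_c(\tau))$ and $(a_c(\tau^\sharp),\tau)$; otherwise ($\tau^\sharp=\tau$) the vertex is terminal. Vertices labelled $(\varnothing,\varnothing)$ are also leaves but are not counted as terminal vertices. A semistandard Young tableau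 of shape $\tau$ and weight $\mu$ is a filling of the Young diagram of $\tau$ with $\mu_1$ ones, $\mu_2$ twos, etc., weakly increasing along rows and strictly increasing down columns. *)

theory Defs
  imports Main
begin

text \<open>Rows are indexed from 1. Compositions / partitions occurring inside tree labels are
represented as functions nat \<Rightarrow> nat (row c \<mapsto> length of row c), zero at index 0 and
beyond the last row.\<close>

definition is_partition_of :: "nat \<Rightarrow> nat list \<Rightarrow> bool" where
  "is_partition_of s lam \<longleftrightarrow> sorted_wrt (\<ge>) lam \<and> (\<forall>x\<in>set lam. 0 < x) \<and> sum_list lam = s"

definition pad :: "nat list \<Rightarrow> nat \<Rightarrow> nat" where
  "pad lam i = (if 1 \<le> i \<and> i \<le> length lam then lam ! (i - 1) else 0)"

definition is_part_fun :: "(nat \<Rightarrow> nat) \<Rightarrow> bool" where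
  "is_part_fun f \<longleftrightarrow> (\<forall>i\<ge>1. f (Suc i) \<le> f i)"

definition rmove :: "nat \<Rightarrow> nat \<Rightarrow> (nat \<Rightarrow> nat) \<Rightarrow> (nat \<Rightarrow> nat)" where
  "rmove c m t = t(c := t c - m, c - 1 := t (c - 1) + m)"

text \<open>Labels: None is the symbol (\<emptyset>,\<emptyset>); Some (\<tau>#, \<tau>) otherwise. Labels are kept in the
normal form \<tau>#_1 = \<tau>_1 (identification of labels differing only in the first row of \<tau>#).\<close>
type_synonym label = "((nat \<Rightarrow> nat) \<times> (nat \<Rightarrow> nat)) option"

definition normalize :: "(nat \<Rightarrow> nat) \<Rightarrow> (nat \<Rightarrow> nat) \<Rightarrow> label" where
  "normalize sh t = Some (sh(1 := t 1), t)"

definition root_label :: "nat list \<Rightarrow> label" where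
  "root_label mu = normalize (pad (take 1 mu)) (pad mu)"

definition has_c :: "nat list \<Rightarrow> (nat \<Rightarrow> nat) \<Rightarrow> (nat \<Rightarrow> nat) \<Rightarrow> bool" where
  "has_c mu sh t \<longleftrightarrow> (\<exists>c. 1 < c \<and> c \<le> length mu \<and> sh c < t c)"

definition min_c :: "nat list \<Rightarrow> (nat \<Rightarrow> nat) \<Rightarrow> (nat \<Rightarrow> nat) \<Rightarrow> nat" where
  "min_c mu sh t = (LEAST c. 1 < c \<and> c \<le> length mu \<and> sh c < t c)"

text \<open>Child of a vertex: False = first child (\<tau>#, r_c^{\<tau>_c-\<tau>#_c}(\<tau>)),
True = second child (a_c(\<tau>#), \<tau>) or (\<emptyset>,\<emptyset>).\<close>
definition child :: "nat list \<Rightarrow> label \<Rightarrow> bool \<Rightarrow> label" where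
  "child mu L b = (case L of None \<Rightarrow> None | Some (sh, t) \<Rightarrow>
     (let c = min_c mu sh t in
      if \<not> b then normalize sh (rmove c (t c - sh c) t)
      else (let sh' = sh(c := sh c + 1) in
            if is_part_fun sh' then normalize sh' t else None)))"

text \<open>Vertices of \<T>(\<mu>) are addressed by their paths from the root.\<close>
definition tree_label :: "nat list \<Rightarrow> bool list \<Rightarrow> label" where
  "tree_label mu p = foldl (child mu) (root_label mu) p"

definition internal_label :: "nat list \<Rightarrow> label \<Rightarrow> bool" where
  "internal_label mu L \<longleftrightarrow> (case L of None \<Rightarrow> False | Some (sh, t) \<Rightarrow> has_c mu sh t)"

definition tree_vertices :: "nat list \<Rightarrow> bool list set" where
  "tree_vertices mu = {p. \<forall>k < length p. internal_label mu (tree_label mu (take k p))}"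

definition terminal_vertices :: "nat list \<Rightarrow> bool list set" where
  "terminal_vertices mu = {p \<in> tree_vertices mu. tree_label mu p \<noteq> None \<and>
                                  \<not> internal_label mu (tree_label mu p)}"

definition terminal_vertices_labelled :: "nat list \<Rightarrow> nat list \<Rightarrow> bool list set" where
  "terminal_vertices_labelled mu tau =
     {p \<in> terminal_vertices mu. tree_label mu p = Some (pad tau, pad tau)}"

text \<open>Semistandard Young tableaux (cells (i,j), row i \<ge> 1, column j \<ge> 1), as fillings
that are 0 outside the diagram.\<close>
definition cells :: "nat list \<Rightarrow> (nat \<times> nat) set" where
  "cells tau = {(i, j). 1 \<le> i \<and> i \<le> length tau \<and> 1 \<le> j \<and> j \<le> tau ! (i - 1)}"

definition SStd :: "nat list \<Rightarrow> nat list \<Rightarrow> (nat \<Rightarrow> nat \<Rightarrow> nat) set" where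
  "SStd tau mu = {T.
     (\<forall>i j. (i, j) \<notin> cells tau \<longrightarrow> T i j = 0) \<and>
     (\<forall>(i, j) \<in> cells tau. 1 \<le> T i j) \<and>
     (\<forall>k\<ge>1. card {(i, j) \<in> cells tau. T i j = k} = pad mu k) \<and>
     (\<forall>i j. (i, j) \<in> cells tau \<and> (i, Suc j) \<in> cells tau \<longrightarrow> T i j \<le> T i (Suc j)) \<and>
     (\<forall>i j. (i, j) \<in> cells tau \<and> (Suc i, j) \<in> cells tau \<longrightarrow> T i j < T (Suc i) j)}"

end

theory Submission
  imports Defs
begin

text \<open>
  Both sets are counted by chains of horizontal strips. Recording, for each \<open>k\<close>, the shape of
  the entries \<open>\<le> k\<close> turns a semistandard tableau of shape \<open>\<tau>\<close> and weight \<open>\<mu>\<close> into a chain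
  \<open>(\<mu>_1) = \<lambda>\<^sup>1 \<subseteq> \<lambda>\<^sup>2 \<subseteq> \<dots> \<subseteq> \<lambda>\<^sup>\<ell> = \<tau>\<close> in which \<open>\<lambda>\<^sup>k\<close> arises from \<open>\<lambda>\<^sup>k\<^sup>-\<^sup>1\<close> by a horizontal strip of
  \<open>\<mu>_k\<close> boxes in the rows \<open>\<le> k\<close>, and conversely.

  A label \<open>(\<tau>#, \<tau>')\<close> of the tree stands for the chains of strips starting at \<open>\<tau>#\<close> whose \<open>k\<close>-th
  strip has \<open>\<tau>'_k - \<tau>#_k\<close> boxes; at the root these are the chains above. For the minimal row \<open>c\<close>
  with \<open>\<tau>#_c < \<tau>'_c\<close>, such a chain either adds a box to row \<open>c\<close> in its \<open>c\<close>-th strip, and these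
  are the chains of the child \<open>(a_c(\<tau>#), \<tau>')\<close>, or its \<open>c\<close>-th strip avoids row \<open>c\<close>, hence lies in the
  rows above, and these are the chains of the child \<open>(\<tau>#, r_c(\<tau>'))\<close>. At a terminal vertex
  \<open>\<tau># = \<tau>'\<close>, and the single remaining chain ends in \<open>\<tau>\<close> iff the label is \<open>(\<tau>, \<tau>)\<close>. So the terminal
  vertices labelled \<open>(\<tau>, \<tau>)\<close> and the tableaux form finite sets of the same size.
\<close>

lemma sum_fun_upd_add:
  fixes f :: "'a \<Rightarrow> 'b::comm_monoid_add"
  assumes "finite A" "a \<in> A"
  shows "sum (f(a := x)) A + f a = sum f A + x"
proof -
  have "sum (f(a := x)) (A - {a}) = sum f (A - {a})" by (rule sum.cong) auto
  then show ?thesis using assms by (simp add: sum.remove add_ac)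
qed

lemma sum_diff_fun_upd_Suc:
  fixes v v' :: "nat \<Rightarrow> nat"
  assumes "finite A" "c \<in> A" "v c < v' c"
  shows "(\<Sum>i\<in>A. v' i - (v(c := v c + 1)) i) + 1 = (\<Sum>i\<in>A. v' i - v i)"
proof -
  have "(\<Sum>i\<in>A - {c}. v' i - (v(c := v c + 1)) i) = (\<Sum>i\<in>A - {c}. v' i - v i)"
    by (rule sum.cong) auto
  then show ?thesis using assms by (simp add: sum.remove)
qed

lemma sum_atLeastAtMost_split_last:
  fixes f :: "nat \<Rightarrow> nat"
  assumes "1 \<le> c"
  shows "(\<Sum>i=1..c. f i) = (\<Sum>i=1..c - 1. f i) + f c"
  using assms sum.cl_ivl_Suc[of f 1 "c - 1"] by simp

section \<open>Chains of horizontal strips\<close>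

text \<open>\<open>v'\<close> arises from the shape \<open>v\<close> by adding \<open>w\<close> boxes in the rows \<open>1..j\<close>, no two in the same
  column (\<open>v'_i \<le> v_(i-1)\<close>); all other rows, including the unused row \<open>0\<close>, stay unchanged.\<close>

definition horizontal_strip :: "nat \<Rightarrow> (nat \<Rightarrow> nat) \<Rightarrow> nat \<Rightarrow> (nat \<Rightarrow> nat) \<Rightarrow> bool" where
  "horizontal_strip j v w v' \<longleftrightarrow>
     (\<forall>i. i = 0 \<or> j < i \<longrightarrow> v' i = v i) \<and> (\<forall>i. 1 \<le> i \<and> i \<le> j \<longrightarrow> v i \<le> v' i) \<and>
     (\<forall>i. 2 \<le> i \<and> i \<le> j \<longrightarrow> v' i \<le> v (i - 1)) \<and> (\<Sum>i=1..j. v' i - v i) = w"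

text \<open>Chains starting at \<open>v\<close> and ending at \<open>P\<close> whose strips have the sizes \<open>ws\<close> and lie in the
  rows \<open>\<le> j\<close>, \<open>\<le> j + 1\<close>, \<dots>; the starting shape is not part of the list.\<close>

fun strip_chains :: "(nat \<Rightarrow> nat) \<Rightarrow> (nat \<Rightarrow> nat) \<Rightarrow> nat \<Rightarrow> nat list \<Rightarrow> (nat \<Rightarrow> nat) list set" where
  "strip_chains P v j [] = (if v = P then {[]} else {})"
| "strip_chains P v j (w # ws) =
     {v' # vs | v' vs. horizontal_strip j v w v' \<and> vs \<in> strip_chains P v' (Suc j) ws}"

lemma is_part_fun_le_prev:
  assumes "is_part_fun v" "2 \<le> c"
  shows "v c \<le> v (c - 1)"
proof -
  have "1 \<le> c - 1" using assms(2) by simp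
  then have "v (Suc (c - 1)) \<le> v (c - 1)"
    using assms(1) unfolding is_part_fun_def by blast
  then show ?thesis using assms(2) by simp
qed

lemma horizontal_strip_zero_iff:
  assumes "is_part_fun v"
  shows "horizontal_strip j v 0 v' \<longleftrightarrow> v' = v"
proof
  assume strip: "horizontal_strip j v 0 v'"
  show "v' = v"
  proof
    fix i
    show "v' i = v i"
    proof (cases "i = 0 \<or> j < i")
      case False
      then have "v i \<le> v' i" and "v' i - v i = 0"
        using strip unfolding horizontal_strip_def by auto
      then show ?thesis by simp
    qed (use strip in \<open>auto simp: horizontal_strip_def\<close>)
  qed
qed (use assms is_part_fun_le_prev in \<open>auto simp: horizontal_strip_def\<close>)

lemma horizontal_stripD:
  assumes "horizontal_strip j v w v'"
  shows "i = 0 \<or> j < i \<Longrightarrow> v' i = v i" and "1 \<le> i \<Longrightarrow> i \<le> j \<Longrightarrow> v i \<le> v' i"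
    and "2 \<le> i \<Longrightarrow> i \<le> j \<Longrightarrow> v' i \<le> v (i - 1)" and "(\<Sum>i=1..j. v' i - v i) = w"
  using assms unfolding horizontal_strip_def by blast+

lemma horizontal_strip_grows:
  assumes "horizontal_strip j v w v'"
  shows "v i \<le> v' i"
  using horizontal_stripD(1,2)[OF assms, of i] by (cases "i = 0 \<or> j < i") auto

lemma horizontal_strip_is_part_fun:
  assumes "is_part_fun v" and strip: "horizontal_strip j v w v'"
  shows "is_part_fun v'"
  unfolding is_part_fun_def
proof (intro allI impI)
  fix i :: nat assume i: "1 \<le> i"
  have "v' (Suc i) \<le> v i"
  proof (cases "Suc i \<le> j")
    case True
    then show ?thesis using horizontal_stripD(3)[OF strip, of "Suc i"] i by simp
  next
    case False
    then have "v' (Suc i) = v (Suc i)" using horizontal_stripD(1)[OF strip] by simp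
    also have "\<dots> \<le> v i" using assms(1) i unfolding is_part_fun_def by blast
    finally show ?thesis .
  qed
  then show "v' (Suc i) \<le> v' i" using horizontal_strip_grows[OF strip, of i] by linarith
qed

lemma strip_chains_zero:
  assumes "is_part_fun v"
  shows "strip_chains P v j (0 # ws) = (\<lambda>vs. v # vs) ` strip_chains P v (Suc j) ws"
  using horizontal_strip_zero_iff[OF assms] by auto

lemma card_strip_chains_zeros:
  assumes "is_part_fun v"
  shows "card (strip_chains P v j (replicate n 0 @ ws)) = card (strip_chains P v (j + n) ws)"
proof (induction n arbitrary: j)
  case (Suc n)
  have "card (strip_chains P v j (replicate (Suc n) 0 @ ws))
      = card (strip_chains P v (Suc j) (replicate n 0 @ ws))"
    by (simp add: strip_chains_zero[OF assms] card_image del: strip_chains.simps)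
  then show ?case using Suc.IH by simp
qed simp

lemma finite_horizontal_strips: "finite {v'. horizontal_strip j v w v'}"
proof -
  let ?restrict = "\<lambda>v'. map v' [0..<Suc j]"
  let ?bound = "w + Max (v ` {0..j})"
  have "inj_on ?restrict {v'. horizontal_strip j v w v'}"
  proof (rule inj_onI, rule ext)
    fix v1 v2 i
    assume "v1 \<in> {v'. horizontal_strip j v w v'}" "v2 \<in> {v'. horizontal_strip j v w v'}"
      and "?restrict v1 = ?restrict v2"
    then show "v1 i = v2 i"
      unfolding horizontal_strip_def map_eq_conv by (cases "i \<le> j") (auto simp del: upt_Suc)
  qed
  moreover have "v' i \<le> ?bound" if strip: "horizontal_strip j v w v'" and "i \<le> j" for v' i
  proof -
    have "v' i \<le> w + v i"
    proof (cases "i = 0")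
      case False
      then have "v' i - v i \<le> (\<Sum>i=1..j. v' i - v i)"
        using \<open>i \<le> j\<close> by (intro member_le_sum) auto
      then show ?thesis using strip unfolding horizontal_strip_def by auto
    qed (use strip in \<open>auto simp: horizontal_strip_def\<close>)
    also have "v i \<le> Max (v ` {0..j})" using \<open>i \<le> j\<close> by (intro Max_ge) auto
    finally show ?thesis by simp
  qed
  then have "?restrict ` {v'. horizontal_strip j v w v'} \<subseteq> {xs. set xs \<subseteq> {..?bound} \<and> length xs = Suc j}"
    by (auto simp del: upt_Suc)
  then have "finite (?restrict ` {v'. horizontal_strip j v w v'})"
    by (rule finite_subset) (rule finite_lists_length_eq, simp)
  ultimately show ?thesis using finite_imageD by blast
qed

lemma finite_strip_chains: "finite (strip_chains P v j ws)"
proof (induction ws arbitrary: v j)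
  case (Cons w ws)
  have "strip_chains P v j (w # ws)
      = (\<Union>v'\<in>{v'. horizontal_strip j v w v'}. (\<lambda>vs. v' # vs) ` strip_chains P v' (Suc j) ws)"
    by auto
  then show ?case using finite_horizontal_strips Cons by simp
qed simp

lemma strip_chains_iff:
  "ch \<in> strip_chains P v j ws \<longleftrightarrow>
     length ch = length ws \<and> (\<forall>k < length ws. horizontal_strip (j + k) ((v # ch) ! k) (ws ! k) (ch ! k)) \<and>
     last (v # ch) = P"
proof (induction ws arbitrary: v j ch)
  case Nil then show ?case by auto
next
  case (Cons w ws)
  show ?case
  proof (cases ch)
    case Nil then show ?thesis by simp
  next
    case (Cons v' rest)
    have "ch \<in> strip_chains P v j (w # ws) \<longleftrightarrow>
        horizontal_strip j v w v' \<and> rest \<in> strip_chains P v' (Suc j) ws"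
      using Cons by auto
    then show ?thesis using Cons Cons.IH by (auto simp add: All_less_Suc2)
  qed
qed

lemma horizontal_strip_add_box_iff:
  assumes "2 \<le> c" "0 < r"
  shows "horizontal_strip c v r v' \<and> v c < v' c \<longleftrightarrow>
         v c + 1 \<le> v (c - 1) \<and> horizontal_strip c (v(c := v c + 1)) (r - 1) v'"
    (is "?lhs \<longleftrightarrow> _ \<and> horizontal_strip c ?v _ v'")
proof
  assume ?lhs
  then have strip: "horizontal_strip c v r v'" and grow: "v c < v' c" by auto
  have sum: "(\<Sum>i=1..c. v' i - ?v i) + 1 = r"
    using sum_diff_fun_upd_Suc[of "{1..c}" c v v'] horizontal_stripD(4)[OF strip] assms grow by simp
  have "v' c \<le> v (c - 1)" using horizontal_stripD(3)[OF strip] assms(1) by simp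
  moreover have "horizontal_strip c ?v (r - 1) v'"
    unfolding horizontal_strip_def
    using horizontal_stripD(1-3)[OF strip] grow sum assms(1) by auto
  ultimately show "v c + 1 \<le> v (c - 1) \<and> horizontal_strip c ?v (r - 1) v'" using grow by simp
next
  assume "v c + 1 \<le> v (c - 1) \<and> horizontal_strip c ?v (r - 1) v'"
  then have strip: "horizontal_strip c ?v (r - 1) v'" by blast
  have grow: "v c < v' c" using horizontal_stripD(2)[OF strip, of c] assms(1) by simp
  have sum: "(\<Sum>i=1..c. v' i - v i) = r"
    using sum_diff_fun_upd_Suc[of "{1..c}" c v v'] horizontal_stripD(4)[OF strip] assms grow by simp
  have "horizontal_strip c v r v'"
    unfolding horizontal_strip_def
  proof (intro conjI allI impI sum)
    fix i
    show "i = 0 \<or> c < i \<Longrightarrow> v' i = v i" using horizontal_stripD(1)[OF strip, of i] assms(1) by auto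
    show "1 \<le> i \<and> i \<le> c \<Longrightarrow> v i \<le> v' i"
      using horizontal_stripD(2)[OF strip, of i] grow by (cases "i = c") auto
    show "2 \<le> i \<and> i \<le> c \<Longrightarrow> v' i \<le> v (i - 1)"
      using horizontal_stripD(3)[OF strip, of i] by (auto split: if_splits)
  qed
  then show ?lhs using grow by blast
qed

lemma horizontal_strip_row_fixed_iff:
  assumes "2 \<le> c" "v c \<le> v (c - 1)"
  shows "horizontal_strip c v r v' \<and> v' c = v c \<longleftrightarrow> horizontal_strip (c - 1) v r v'"
proof
  assume "horizontal_strip c v r v' \<and> v' c = v c"
  then have strip: "horizontal_strip c v r v'" and fixed: "v' c = v c" by auto
  show "horizontal_strip (c - 1) v r v'"
    unfolding horizontal_strip_def
  proof (intro conjI allI impI)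
    fix i
    show "i = 0 \<or> c - 1 < i \<Longrightarrow> v' i = v i"
      using horizontal_stripD(1)[OF strip, of i] fixed by (cases "i = c") auto
    show "1 \<le> i \<and> i \<le> c - 1 \<Longrightarrow> v i \<le> v' i" using horizontal_stripD(2)[OF strip, of i] by auto
    show "2 \<le> i \<and> i \<le> c - 1 \<Longrightarrow> v' i \<le> v (i - 1)" using horizontal_stripD(3)[OF strip, of i] by auto
  next
    show "(\<Sum>i=1..c - 1. v' i - v i) = r"
      using horizontal_stripD(4)[OF strip] sum_atLeastAtMost_split_last[of c] assms(1) fixed by simp
  qed
next
  assume strip: "horizontal_strip (c - 1) v r v'"
  have fixed: "v' c = v c" using horizontal_stripD(1)[OF strip, of c] assms(1) by simp
  have "horizontal_strip c v r v'"
    unfolding horizontal_strip_def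
  proof (intro conjI allI impI)
    fix i
    show "i = 0 \<or> c < i \<Longrightarrow> v' i = v i" using horizontal_stripD(1)[OF strip, of i] by auto
    show "1 \<le> i \<and> i \<le> c \<Longrightarrow> v i \<le> v' i"
      using horizontal_stripD(2)[OF strip, of i] fixed by (cases "i = c") auto
    show "2 \<le> i \<and> i \<le> c \<Longrightarrow> v' i \<le> v (i - 1)"
      using horizontal_stripD(3)[OF strip, of i] fixed assms(2) by (cases "i = c") auto
  next
    show "(\<Sum>i=1..c. v' i - v i) = r"
      using horizontal_stripD(4)[OF strip] sum_atLeastAtMost_split_last[of c] assms(1) fixed by simp
  qed
  then show "horizontal_strip c v r v' \<and> v' c = v c" using fixed by blast
qed

text \<open>In the second summand the first strip avoids row \<open>c\<close>; it is recorded as a strip in the rows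
  above \<open>c\<close> followed by an empty strip.\<close>

lemma card_strip_chains_split:
  assumes v: "is_part_fun v" and c: "2 \<le> c" and r: "0 < r"
  shows "card (strip_chains P v c (r # ws)) =
    (if v c + 1 \<le> v (c - 1) then card (strip_chains P (v(c := v c + 1)) c ((r - 1) # ws)) else 0) +
    card (strip_chains P v (c - 1) (r # 0 # ws))"
proof -
  let ?rest = "\<lambda>v'. strip_chains P v' (Suc c) ws"
  define A where "A = {v' # vs | v' vs. (horizontal_strip c v r v' \<and> v c < v' c) \<and> vs \<in> ?rest v'}"
  define B where "B = {v' # vs | v' vs. (horizontal_strip c v r v' \<and> v' c = v c) \<and> vs \<in> ?rest v'}"
  have grow_or_fixed: "v c < v' c \<or> v' c = v c" if "horizontal_strip c v r v'" for v'
    using horizontal_strip_grows[OF that, of c] by linarith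
  have "strip_chains P v c (r # ws) = A \<union> B"
    unfolding A_def B_def strip_chains.simps(2) using grow_or_fixed by blast
  moreover have "A \<inter> B = {}" unfolding A_def B_def by auto
  moreover have "finite A" "finite B"
    using finite_strip_chains[of P v c "r # ws"] unfolding A_def B_def
    by (auto elim!: rev_finite_subset)
  ultimately have "card (strip_chains P v c (r # ws)) = card A + card B"
    by (simp add: card_Un_disjoint)
  moreover have "A = (if v c + 1 \<le> v (c - 1) then strip_chains P (v(c := v c + 1)) c ((r - 1) # ws) else {})"
    unfolding A_def using horizontal_strip_add_box_iff[OF c r] by auto
  moreover have "strip_chains P v (c - 1) (r # 0 # ws) = (\<lambda>vs. hd vs # vs) ` B"
  proof -
    have zero: "horizontal_strip c v' 0 v'' \<longleftrightarrow> v'' = v'"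
      if "horizontal_strip (c - 1) v r v'" for v' v''
      using horizontal_strip_zero_iff[OF horizontal_strip_is_part_fun[OF v that]] .
    have "Suc (c - 1) = c" using c by simp
    then have "strip_chains P v (c - 1) (r # 0 # ws)
        = {v' # v' # vs | v' vs. horizontal_strip (c - 1) v r v' \<and> vs \<in> ?rest v'}"
      using zero by auto
    also have "\<dots> = (\<lambda>vs. hd vs # vs) ` B"
      unfolding B_def horizontal_strip_row_fixed_iff[OF c is_part_fun_le_prev[OF v c], symmetric]
      by (force simp: image_iff)
    finally show ?thesis .
  qed
  then have "card (strip_chains P v (c - 1) (r # 0 # ws)) = card B"
    by (simp add: card_image inj_on_def)
  ultimately show ?thesis by simp
qed

lemma card_strip_chains_row_one:
  assumes "is_part_fun v"
  shows "card (strip_chains P v 1 (r # 0 # ws)) = card (strip_chains P (v(1 := v 1 + r)) 3 ws)"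
proof -
  let ?u = "v(1 := v 1 + r)"
  have strip_iff: "horizontal_strip 1 v r v' \<longleftrightarrow> v' = ?u" for v'
  proof
    assume strip: "horizontal_strip 1 v r v'"
    show "v' = ?u"
    proof
      fix i
      show "v' i = ?u i"
      proof (cases "i = 1")
        case False
        then have "i = 0 \<or> 1 < i" by linarith
        then show ?thesis using horizontal_stripD(1)[OF strip] False by simp
      qed (use horizontal_stripD(4)[OF strip] horizontal_strip_grows[OF strip, of 1] in simp)
    qed
  qed (auto simp: horizontal_strip_def)
  have "is_part_fun ?u" using horizontal_strip_is_part_fun[OF assms] strip_iff by blast
  then have "strip_chains P v 1 (r # 0 # ws) = (\<lambda>vs. ?u # ?u # vs) ` strip_chains P ?u 3 ws"
    using strip_iff horizontal_strip_zero_iff by (auto simp: numeral_3_eq_3 numeral_2_eq_2)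
  then show ?thesis by (simp add: card_image inj_on_def)
qed

section \<open>The tree counts chains of strips\<close>

definition strip_weights :: "nat \<Rightarrow> (nat \<Rightarrow> nat) \<Rightarrow> (nat \<Rightarrow> nat) \<Rightarrow> nat \<Rightarrow> nat list" where
  "strip_weights l sh t c = map (\<lambda>j. t j - sh j) [c..<Suc l]"

definition label_chains :: "nat list \<Rightarrow> (nat \<Rightarrow> nat) \<Rightarrow> label \<Rightarrow> (nat \<Rightarrow> nat) list set" where
  "label_chains mu P L =
     (case L of None \<Rightarrow> {} | Some (sh, t) \<Rightarrow> strip_chains P sh 2 (strip_weights (length mu) sh t 2))"

definition valid_label :: "nat list \<Rightarrow> (nat \<Rightarrow> nat) \<Rightarrow> (nat \<Rightarrow> nat) \<Rightarrow> bool" where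
  "valid_label mu sh t \<longleftrightarrow> is_part_fun sh \<and> sh 1 = t 1 \<and>
     (\<forall>j. 2 \<le> j \<and> j \<le> length mu \<longrightarrow> sh j \<le> t j) \<and> (\<forall>j. j = 0 \<or> length mu < j \<longrightarrow> sh j = 0 \<and> t j = 0)"

definition label_moment :: "nat list \<Rightarrow> label \<Rightarrow> nat" where
  "label_moment mu L = (case L of None \<Rightarrow> 0 | Some (sh, t) \<Rightarrow> \<Sum>i=1..length mu. i * t i)"

definition label_deficit :: "nat list \<Rightarrow> label \<Rightarrow> nat" where
  "label_deficit mu L = (case L of None \<Rightarrow> 0 | Some (sh, t) \<Rightarrow> \<Sum>i=2..length mu. t i - sh i)"

lemma strip_weights_Cons:
  "c \<le> l \<Longrightarrow> strip_weights l sh t c = (t c - sh c) # strip_weights l sh t (Suc c)"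
  unfolding strip_weights_def by (simp add: upt_conv_Cons del: upt_Suc)

lemma card_strip_chains_skip:
  assumes "is_part_fun sh" "2 \<le> c" "c \<le> Suc l" "\<forall>j. 2 \<le> j \<and> j < c \<longrightarrow> t j \<le> sh j"
  shows "card (strip_chains P sh 2 (strip_weights l sh t 2)) = card (strip_chains P sh c (strip_weights l sh t c))"
proof -
  have "[2..<Suc l] = [2..<c] @ [c..<Suc l]"
    using assms(2,3) upt_add_eq_append[of 2 c "Suc l - c"] by simp
  moreover have "map (\<lambda>j. t j - sh j) [2..<c] = map (\<lambda>j. 0) [2..<c]"
    using assms(4) by (intro map_cong) auto
  ultimately have "strip_weights l sh t 2 = replicate (c - 2) 0 @ strip_weights l sh t c"
    unfolding strip_weights_def by (simp add: map_replicate_const)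
  moreover have "2 + (c - 2) = c" using assms(2) by simp
  ultimately show ?thesis using card_strip_chains_zeros[OF assms(1), of P 2 "c - 2"] by simp
qed

lemma min_c_spec:
  assumes "has_c mu sh t"
  shows "1 < min_c mu sh t" "min_c mu sh t \<le> length mu" "sh (min_c mu sh t) < t (min_c mu sh t)"
    and "\<And>j. 1 < j \<Longrightarrow> j < min_c mu sh t \<Longrightarrow> j \<le> length mu \<Longrightarrow> t j \<le> sh j"
proof -
  have ex: "\<exists>c. 1 < c \<and> c \<le> length mu \<and> sh c < t c" using assms unfolding has_c_def .
  show "1 < min_c mu sh t" "min_c mu sh t \<le> length mu" "sh (min_c mu sh t) < t (min_c mu sh t)"
    using LeastI_ex[OF ex] unfolding min_c_def by auto
  fix j assume "1 < j" "j < min_c mu sh t" "j \<le> length mu"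
  then show "t j \<le> sh j" unfolding min_c_def using not_less_Least by fastforce
qed

lemma valid_label_min_c:
  assumes "valid_label mu sh t" "has_c mu sh t" "c = min_c mu sh t"
  shows "2 \<le> c" "c \<le> length mu" "sh c < t c" "\<And>j. 2 \<le> j \<Longrightarrow> j < c \<Longrightarrow> sh j = t j"
proof -
  show c: "2 \<le> c" "c \<le> length mu" "sh c < t c" using min_c_spec[OF assms(2)] assms(3) by auto
  fix j assume "2 \<le> j" "j < c"
  then show "sh j = t j"
    using min_c_spec(4)[OF assms(2), of j] assms(1,3) c(2) unfolding valid_label_def by force
qed

lemma is_part_fun_add_box_iff:
  assumes "is_part_fun sh" "2 \<le> c"
  shows "is_part_fun (sh(c := sh c + 1)) \<longleftrightarrow> sh c + 1 \<le> sh (c - 1)"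
proof
  assume "is_part_fun (sh(c := sh c + 1))"
  then show "sh c + 1 \<le> sh (c - 1)"
    using is_part_fun_le_prev[of "sh(c := sh c + 1)" c] assms(2) by (simp split: if_splits)
next
  assume room: "sh c + 1 \<le> sh (c - 1)"
  show "is_part_fun (sh(c := sh c + 1))"
    unfolding is_part_fun_def
  proof (intro allI impI)
    fix i :: nat assume "1 \<le> i"
    then show "(sh(c := sh c + 1)) (Suc i) \<le> (sh(c := sh c + 1)) i"
      using assms(1) room unfolding is_part_fun_def by (cases "Suc i = c") auto
  qed
qed

lemma child_add_box:
  assumes "valid_label mu sh t" "has_c mu sh t" "c = min_c mu sh t"
  shows "child mu (Some (sh, t)) True =
    (if sh c + 1 \<le> sh (c - 1) then Some (sh(c := sh c + 1), t) else None)"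
proof -
  have c: "2 \<le> c" using valid_label_min_c[OF assms] by simp
  have sh: "is_part_fun sh" "sh 1 = t 1" using assms(1) unfolding valid_label_def by auto
  then have "(sh(c := sh c + 1))(1 := t 1) = sh(c := sh c + 1)" using c by (auto simp: fun_eq_iff)
  then show ?thesis
    unfolding child_def Let_def normalize_def using is_part_fun_add_box_iff[OF sh(1) c] assms(3) by auto
qed

lemma child_move_boxes:
  assumes "valid_label mu sh t" "has_c mu sh t" "c = min_c mu sh t"
    and "t' = t(c := sh c, c - 1 := t (c - 1) + (t c - sh c))"
  shows "child mu (Some (sh, t)) False = Some (sh(1 := t' 1), t')"
proof -
  have "t c - (t c - sh c) = sh c" using valid_label_min_c(3)[OF assms(1-3)] by simp
  then show ?thesis unfolding child_def Let_def normalize_def rmove_def using assms(3,4) by auto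
qed

lemma valid_label_add_box:
  assumes "valid_label mu sh t" "2 \<le> c" "c \<le> length mu" "sh c < t c" "sh c + 1 \<le> sh (c - 1)"
  shows "valid_label mu (sh(c := sh c + 1)) t"
  using assms is_part_fun_add_box_iff[of sh c] unfolding valid_label_def by auto

lemma valid_label_move_boxes:
  assumes "valid_label mu sh t" "2 \<le> c" "c \<le> length mu"
    and t': "t' = t(c := sh c, c - 1 := t (c - 1) + r)"
  shows "valid_label mu (sh(1 := t' 1)) t'"
proof -
  have sh: "is_part_fun sh" "sh 1 = t 1" "\<And>j. 2 \<le> j \<Longrightarrow> j \<le> length mu \<Longrightarrow> sh j \<le> t j"
    using assms(1) unfolding valid_label_def by auto
  have "t 1 \<le> t' 1" using assms(2) t' by simp
  then have "is_part_fun (sh(1 := t' 1))"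
    using sh(1,2) unfolding is_part_fun_def by (auto intro: le_trans)
  moreover have "sh j \<le> t' j" if "2 \<le> j" "j \<le> length mu" for j
    using sh(3)[OF that] t' by auto
  ultimately show ?thesis using assms(1-3) t' unfolding valid_label_def by auto
qed

lemma child_valid:
  assumes "valid_label mu sh t" "has_c mu sh t"
  shows "pred_option (\<lambda>(sh', t'). valid_label mu sh' t') (child mu (Some (sh, t)) b)"
proof -
  define c where "c = min_c mu sh t"
  note c = valid_label_min_c[OF assms c_def]
  show ?thesis
  proof (cases b)
    case True
    then show ?thesis
      using child_add_box[OF assms c_def] valid_label_add_box[OF assms(1) c(1-3)] by simp
  next
    case False
    then show ?thesis
      using child_move_boxes[OF assms c_def refl] valid_label_move_boxes[OF assms(1) c(1,2) refl] by simp
  qed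
qed

lemma weighted_sum_move_boxes_up_less:
  fixes t :: "nat \<Rightarrow> nat"
  assumes "2 \<le> c" "c \<le> l" "0 < r" "r \<le> t c"
  shows "(\<Sum>i=1..l. i * (t(c := t c - r, c - 1 := t (c - 1) + r)) i) < (\<Sum>i=1..l. i * t i)"
proof -
  define g where "g = (\<lambda>i::nat. i * t i)"
  define g1 where "g1 = g(c := c * (t c - r))"
  define g2 where "g2 = g1(c - 1 := (c - 1) * (t (c - 1) + r))"
  have members: "c \<in> {1..l}" "c - 1 \<in> {1..l}" using assms(1,2) by auto
  have "(\<Sum>i=1..l. i * (t(c := t c - r, c - 1 := t (c - 1) + r)) i) = sum g2 {1..l}"
    by (rule sum.cong) (auto simp: g2_def g1_def g_def)
  moreover have "sum g2 {1..l} + g1 (c - 1) = sum g1 {1..l} + (c - 1) * (t (c - 1) + r)"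
    unfolding g2_def using members by (intro sum_fun_upd_add) auto
  moreover have "g1 (c - 1) = (c - 1) * t (c - 1)" using assms(1) by (auto simp: g1_def g_def)
  moreover have "sum g1 {1..l} + c * t c = sum g {1..l} + c * (t c - r)"
    unfolding g1_def using members sum_fun_upd_add[of "{1..l}" c g] by (simp add: g_def)
  moreover have "c * t c = c * (t c - r) + c * r"
    using assms(4) add_mult_distrib2[of c "t c - r" r] by simp
  moreover have "c * r = (c - 1) * r + r" using assms(1) by (cases c) auto
  moreover have "(c - 1) * (t (c - 1) + r) = (c - 1) * t (c - 1) + (c - 1) * r"
    by (simp add: algebra_simps)
  moreover have "sum g {1..l} = (\<Sum>i=1..l. i * t i)" by (simp add: g_def)
  ultimately show ?thesis using assms(3) by linarith
qed

text \<open>Moving boxes to the row above lowers the moment; adding a box lowers the deficit.\<close>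

lemma child_decreases:
  assumes "valid_label mu sh t" "has_c mu sh t"
  shows "(child mu (Some (sh, t)) b, Some (sh, t)) \<in> measures [label_moment mu, label_deficit mu]"
proof -
  define c where "c = min_c mu sh t"
  define r where "r = t c - sh c"
  let ?l = "length mu"
  note c = valid_label_min_c[OF assms c_def]
  show ?thesis
  proof (cases b)
    case False
    define t' where "t' = t(c := sh c, c - 1 := t (c - 1) + r)"
    have "t' = t(c := t c - r, c - 1 := t (c - 1) + r)" using c(3) unfolding t'_def r_def by simp
    then have "(\<Sum>i=1..?l. i * t' i) < (\<Sum>i=1..?l. i * t i)"
      using weighted_sum_move_boxes_up_less[of c ?l r t] c(1-3) unfolding r_def by simp
    then show ?thesis
      using False child_move_boxes[OF assms c_def t'_def[unfolded r_def]]
      by (simp add: label_moment_def t'_def r_def)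
  next
    case True
    show ?thesis
    proof (cases "sh c + 1 \<le> sh (c - 1)")
      case room: True
      have "(\<Sum>i=2..?l. t i - (sh(c := sh c + 1)) i) < (\<Sum>i=2..?l. t i - sh i)"
        by (rule sum_strict_mono_ex1) (use c in auto)
      then show ?thesis
        using True room child_add_box[OF assms c_def] by (simp add: label_moment_def label_deficit_def)
    next
      case False
      have "0 < c * t c" using c(1,3) by simp
      also have "c * t c \<le> (\<Sum>i=1..?l. i * t i)" by (rule member_le_sum) (use c in auto)
      finally show ?thesis
        using True False child_add_box[OF assms c_def] by (simp add: label_moment_def)
    qed
  qed
qed

lemma card_label_chains_min_c:
  assumes "valid_label mu sh t" "has_c mu sh t" "c = min_c mu sh t"
  shows "card (label_chains mu P (Some (sh, t))) =
    card (strip_chains P sh c ((t c - sh c) # strip_weights (length mu) sh t (Suc c)))"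
proof -
  note c = valid_label_min_c[OF assms]
  have "is_part_fun sh" using assms(1) unfolding valid_label_def by simp
  then show ?thesis
    unfolding label_chains_def using card_strip_chains_skip[of sh c "length mu" t P] c
    by (simp add: strip_weights_Cons)
qed

lemma card_label_chains_add_box:
  assumes "valid_label mu sh t" "has_c mu sh t" "c = min_c mu sh t" "sh c + 1 \<le> sh (c - 1)"
  shows "card (label_chains mu P (Some (sh(c := sh c + 1), t))) =
    card (strip_chains P (sh(c := sh c + 1)) c ((t c - sh c - 1) # strip_weights (length mu) sh t (Suc c)))"
proof -
  let ?sh = "sh(c := sh c + 1)"
  note c = valid_label_min_c[OF assms(1-3)]
  have "valid_label mu ?sh t" using valid_label_add_box[OF assms(1) c(1-3) assms(4)] .
  then have "is_part_fun ?sh" unfolding valid_label_def by simp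
  moreover have "strip_weights (length mu) ?sh t (Suc c) = strip_weights (length mu) sh t (Suc c)"
    unfolding strip_weights_def by (intro map_cong) auto
  ultimately show ?thesis
    unfolding label_chains_def using card_strip_chains_skip[of ?sh c "length mu" t P] c
    by (simp add: strip_weights_Cons)
qed

lemma card_label_chains_move_boxes:
  assumes "valid_label mu sh t" "has_c mu sh t" "c = min_c mu sh t"
    and t': "t' = t(c := sh c, c - 1 := t (c - 1) + (t c - sh c))"
  shows "card (label_chains mu P (Some (sh(1 := t' 1), t'))) =
    card (strip_chains P sh (c - 1) ((t c - sh c) # 0 # strip_weights (length mu) sh t (Suc c)))"
proof -
  let ?l = "length mu" and ?r = "t c - sh c" and ?ws = "strip_weights (length mu) sh t (Suc c)"
  note c = valid_label_min_c[OF assms(1-3)]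
  have sh: "is_part_fun sh" "sh 1 = t 1" using assms(1) unfolding valid_label_def by auto
  have valid': "valid_label mu (sh(1 := t' 1)) t'"
    using valid_label_move_boxes[OF assms(1) c(1,2) t'] .
  have tail: "strip_weights ?l sh' t' (Suc c) = ?ws" if "sh' (Suc c) = sh (Suc c)" "\<forall>j>c. sh' j = sh j" for sh'
    unfolding strip_weights_def using t' that by (intro map_cong) auto
  show ?thesis
  proof (cases "c = 2")
    case True
    let ?sh = "sh(1 := sh 1 + ?r)"
    have "sh(1 := t' 1) = ?sh" using True t' sh(2) by simp
    moreover have "is_part_fun ?sh" using valid' calculation unfolding valid_label_def by simp
    moreover have "\<forall>j. 2 \<le> j \<and> j < 3 \<longrightarrow> t' j \<le> ?sh j"
      using True t' by (auto simp: numeral_3_eq_3 less_Suc_eq)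
    moreover have "3 \<le> Suc ?l" using c(2) True by simp
    ultimately have "card (label_chains mu P (Some (sh(1 := t' 1), t'))) =
        card (strip_chains P ?sh 3 (strip_weights ?l ?sh t' 3))"
      unfolding label_chains_def using card_strip_chains_skip[of ?sh 3 ?l t' P] by simp
    also have "strip_weights ?l ?sh t' 3 = ?ws" using tail[of ?sh] True by (simp add: numeral_3_eq_3)
    finally have "card (label_chains mu P (Some (sh(1 := t' 1), t'))) = card (strip_chains P ?sh 3 ?ws)" .
    moreover have "c - 1 = 1" using True by simp
    ultimately show ?thesis using card_strip_chains_row_one[OF sh(1), where P = P and r = ?r and ws = ?ws]
      by (simp del: strip_chains.simps)
  next
    case False
    then have c3: "3 \<le> c" using c(1) by simp
    have "sh(1 := t' 1) = sh" using c3 t' sh(2) by (auto simp: fun_eq_iff)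
    moreover have "strip_weights ?l sh t' (c - 1) = ?r # 0 # ?ws"
    proof -
      have row: "c - 1 \<noteq> c" "Suc (c - 1) = c" "sh (c - 1) = t (c - 1)" using c3 c(4)[of "c - 1"] by auto
      have "strip_weights ?l sh t' (c - 1)
          = (t' (c - 1) - sh (c - 1)) # (t' c - sh c) # strip_weights ?l sh t' (Suc c)"
        using c(2) row(2) strip_weights_Cons[of "c - 1" ?l sh t'] strip_weights_Cons[of c ?l sh t'] by simp
      also have "\<dots> = ?r # 0 # ?ws" using row tail[of sh] t' by simp
      finally show ?thesis .
    qed
    moreover have "t' j \<le> sh j" if "2 \<le> j" "j < c - 1" for j using c(4)[of j] that t' by auto
    ultimately show ?thesis
      unfolding label_chains_def using card_strip_chains_skip[of sh "c - 1" ?l t' P] sh(1) c3 c(2)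
      by simp
  qed
qed

lemma card_label_chains_children:
  assumes "valid_label mu sh t" "has_c mu sh t"
  shows "card (label_chains mu P (Some (sh, t))) =
    card (label_chains mu P (child mu (Some (sh, t)) False)) +
    card (label_chains mu P (child mu (Some (sh, t)) True))"
proof -
  define c where "c = min_c mu sh t"
  note c = valid_label_min_c[OF assms c_def]
  have "is_part_fun sh" using assms(1) unfolding valid_label_def by simp
  note split = card_strip_chains_split[OF this c(1), of "t c - sh c" P]
  have "card (label_chains mu P (child mu (Some (sh, t)) True)) =
      (if sh c + 1 \<le> sh (c - 1)
       then card (strip_chains P (sh(c := sh c + 1)) c ((t c - sh c - 1) # strip_weights (length mu) sh t (Suc c)))
       else 0)"
    using child_add_box[OF assms c_def] card_label_chains_add_box[OF assms c_def]
    by (simp add: label_chains_def)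
  then show ?thesis
    using split c(3) card_label_chains_min_c[OF assms c_def]
      child_move_boxes[OF assms c_def refl] card_label_chains_move_boxes[OF assms c_def refl]
    by simp
qed

definition terminal_paths :: "nat list \<Rightarrow> (nat \<Rightarrow> nat) \<Rightarrow> label \<Rightarrow> bool list set" where
  "terminal_paths mu P L = {p. (\<forall>k < length p. internal_label mu (foldl (child mu) L (take k p))) \<and>
                              foldl (child mu) L p = Some (P, P)}"

lemma not_internal_diagonal_label: "\<not> internal_label mu (Some (P, P))"
  unfolding internal_label_def has_c_def by auto

lemma terminal_paths_internal:
  assumes "internal_label mu L"
  shows "terminal_paths mu P L =
    (\<lambda>q. False # q) ` terminal_paths mu P (child mu L False) \<union>
    (\<lambda>q. True # q) ` terminal_paths mu P (child mu L True)"
proof -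
  have Cons_iff: "b # q \<in> terminal_paths mu P L \<longleftrightarrow> q \<in> terminal_paths mu P (child mu L b)" for b q
    unfolding terminal_paths_def using assms by (simp add: All_less_Suc2)
  have "[] \<notin> terminal_paths mu P L"
    using assms not_internal_diagonal_label unfolding terminal_paths_def by auto
  show ?thesis
  proof (intro set_eqI iffI)
    fix p assume p: "p \<in> terminal_paths mu P L"
    then obtain b q where "p = b # q" using \<open>[] \<notin> terminal_paths mu P L\<close> by (cases p) auto
    then show "p \<in> (\<lambda>q. False # q) ` terminal_paths mu P (child mu L False) \<union>
        (\<lambda>q. True # q) ` terminal_paths mu P (child mu L True)"
      using p Cons_iff by (cases b) auto
  qed (use Cons_iff in auto)
qed

lemma terminal_paths_not_internal:
  assumes "\<not> internal_label mu L"
  shows "terminal_paths mu P L = (if L = Some (P, P) then {[]} else {})"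
proof -
  have "p \<in> terminal_paths mu P L \<longleftrightarrow> p = [] \<and> L = Some (P, P)" for p
    using assms by (cases p) (auto simp: terminal_paths_def All_less_Suc2)
  then show ?thesis by auto
qed

lemma valid_label_not_has_c:
  assumes "valid_label mu sh t" "\<not> has_c mu sh t"
  shows "sh = t"
proof
  fix j
  show "sh j = t j"
  proof (cases "2 \<le> j \<and> j \<le> length mu")
    case True
    then show ?thesis using assms unfolding valid_label_def has_c_def by (metis Suc_1 Suc_le_lessD le_antisym not_le)
  next
    case False
    then have "j = 0 \<or> j = 1 \<or> length mu < j" by auto
    then show ?thesis using assms(1) unfolding valid_label_def by auto
  qed
qed

lemma card_label_chains_diagonal:
  assumes "is_part_fun t"
  shows "card (label_chains mu P (Some (t, t))) = (if t = P then 1 else 0)"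
proof -
  have "strip_weights (length mu) t t 2 = replicate (length mu - 1) 0 @ []"
    by (simp add: strip_weights_def map_replicate_const) linarith
  then show ?thesis
    unfolding label_chains_def using card_strip_chains_zeros[OF assms, of P 2 "length mu - 1" "[]"] by simp
qed

lemma card_terminal_paths:
  "pred_option (\<lambda>(sh, t). valid_label mu sh t) L \<Longrightarrow>
     finite (terminal_paths mu P L) \<and> card (terminal_paths mu P L) = card (label_chains mu P L)"
proof (induction L rule: wf_induct[OF wf_measures[of "[label_moment mu, label_deficit mu]"]])
  case (1 L)
  show ?case
  proof (cases L)
    case None
    then show ?thesis using terminal_paths_not_internal by (simp add: internal_label_def label_chains_def)
  next
    case (Some label)
    then obtain sh t where L: "L = Some (sh, t)" and valid: "valid_label mu sh t"
      using "1.prems" by (cases label) auto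
    show ?thesis
    proof (cases "has_c mu sh t")
      case True
      let ?paths = "\<lambda>b. terminal_paths mu P (child mu L b)"
      have IH: "finite (?paths b) \<and> card (?paths b) = card (label_chains mu P (child mu L b))" for b
        using "1.IH" child_decreases[OF valid True] child_valid[OF valid True] unfolding L by blast
      have paths: "terminal_paths mu P L = (\<lambda>q. False # q) ` ?paths False \<union> (\<lambda>q. True # q) ` ?paths True"
        using terminal_paths_internal True unfolding L internal_label_def by simp
      have "card (terminal_paths mu P L) = card (?paths False) + card (?paths True)"
        unfolding paths using IH by (subst card_Un_disjoint) (auto simp: card_image)
      then show ?thesis
        using IH paths card_label_chains_children[OF valid True] unfolding L by simp
    next
      case False
      then have "sh = t" using valid_label_not_has_c[OF valid] by simp
      moreover have "is_part_fun sh" using valid unfolding valid_label_def by simp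
      ultimately show ?thesis
        using terminal_paths_not_internal[of mu L P] card_label_chains_diagonal[of t mu P] False
        unfolding L internal_label_def by simp
    qed
  qed
qed

section \<open>Tableaux as chains of strips\<close>

definition subshape :: "nat list \<Rightarrow> (nat \<Rightarrow> nat \<Rightarrow> nat) \<Rightarrow> nat \<Rightarrow> nat \<Rightarrow> nat" where
  "subshape tau T k i = card {j. (i, j) \<in> cells tau \<and> T i j \<le> k}"

definition first_row_shape :: "nat list \<Rightarrow> nat \<Rightarrow> nat" where
  "first_row_shape mu i = (if i = 1 then pad mu 1 else 0)"

definition chain_shape :: "nat list \<Rightarrow> nat list \<Rightarrow> (nat \<Rightarrow> nat) list \<Rightarrow> nat \<Rightarrow> nat \<Rightarrow> nat" where
  "chain_shape mu tau ch k =
     (if k = 0 then (\<lambda>_. 0) else if k \<le> Suc (length ch) then (first_row_shape mu # ch) ! (k - 1) else pad tau)"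

lemma mem_cells_iff: "(i, j) \<in> cells tau \<longleftrightarrow> 1 \<le> i \<and> 1 \<le> j \<and> j \<le> pad tau i"
  unfolding cells_def pad_def by auto

lemma pad_antimono:
  assumes "sorted_wrt (\<ge>) tau" "1 \<le> i" "i \<le> i'"
  shows "pad tau i' \<le> pad tau i"
proof (cases "i' \<le> length tau \<and> i \<noteq> i'")
  case True
  then have "tau ! (i' - 1) \<le> tau ! (i - 1)" using assms unfolding sorted_wrt_iff_nth_less by auto
  then show ?thesis using assms True unfolding pad_def by auto
qed (auto simp: pad_def)

lemma is_part_fun_pad: "sorted_wrt (\<ge>) tau \<Longrightarrow> is_part_fun (pad tau)"
  unfolding is_part_fun_def using pad_antimono by simp

lemma finite_cells: "finite (cells tau)"
proof -
  have "cells tau \<subseteq> {0..length tau} \<times> {0..sum_list tau}"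
  proof
    fix x assume "x \<in> cells tau"
    then obtain i j where x: "x = (i, j)" "1 \<le> i" "i \<le> length tau" "j \<le> tau ! (i - 1)"
      unfolding cells_def by auto
    then have "tau ! (i - 1) \<le> sum_list tau" by (intro elem_le_sum_list) auto
    then show "x \<in> {0..length tau} \<times> {0..sum_list tau}" using x by auto
  qed
  then show ?thesis by (rule finite_subset) auto
qed

lemma finite_cells_row: "finite {j. (i, j) \<in> cells tau \<and> Q j}"
  by (rule finite_subset[of _ "{..pad tau i}"]) (auto simp: mem_cells_iff)

lemma cells_row_left: "(i, j') \<in> cells tau \<Longrightarrow> 1 \<le> j \<Longrightarrow> j \<le> j' \<Longrightarrow> (i, j) \<in> cells tau"
  using mem_cells_iff by auto

text \<open>Entries equal to \<open>k \<ge> 1\<close> are the boxes of \<open>subshape k\<close> outside \<open>subshape (k - 1)\<close>; they lie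
  in the rows \<open>\<le> k\<close> as soon as every entry is at least its row index.\<close>

lemma card_entries_eq_sum_subshape:
  assumes "\<And>i j. (i, j) \<in> cells tau \<Longrightarrow> i \<le> T i j" "1 \<le> k"
  shows "card {(i, j) \<in> cells tau. T i j = k} = (\<Sum>i=1..k. subshape tau T k i - subshape tau T (k - 1) i)"
proof -
  let ?A = "\<lambda>k i. {j. (i, j) \<in> cells tau \<and> T i j \<le> k}"
  have "{(i, j) \<in> cells tau. T i j = k} = Sigma {1..k} (\<lambda>i. ?A k i - ?A (k - 1) i)"
    using assms by (force simp: mem_cells_iff)
  then have "card {(i, j) \<in> cells tau. T i j = k} = (\<Sum>i=1..k. card (?A k i - ?A (k - 1) i))"
    by (simp add: card_SigmaI finite_cells_row)
  also have "\<dots> = (\<Sum>i=1..k. subshape tau T k i - subshape tau T (k - 1) i)"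
    unfolding subshape_def by (intro sum.cong refl card_Diff_subset finite_cells_row) auto
  finally show ?thesis .
qed

locale tableau_shape =
  fixes tau mu :: "nat list"
  assumes tau_sorted: "sorted_wrt (\<ge>) tau"
begin

abbreviation "P \<equiv> pad tau"
abbreviation "l \<equiv> length mu"
abbreviation "tableau_chains \<equiv> strip_chains P (first_row_shape mu) 2 (map (pad mu) [2..<Suc l])"
abbreviation "subshapes T \<equiv> map (subshape tau T) [2..<Suc l]"

lemma cells_column_up: "(Suc i, j) \<in> cells tau \<Longrightarrow> 1 \<le> i \<Longrightarrow> (i, j) \<in> cells tau"
  using mem_cells_iff pad_antimono[OF tau_sorted, of i "Suc i"] by auto

context
  fixes T assumes tableau: "T \<in> SStd tau mu"
begin

lemma entry_outside: "(i, j) \<notin> cells tau \<Longrightarrow> T i j = 0"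
  and entry_pos: "(i, j) \<in> cells tau \<Longrightarrow> 1 \<le> T i j"
  and entry_count: "1 \<le> k \<Longrightarrow> card {(i, j) \<in> cells tau. T i j = k} = pad mu k"
  and entry_row_le: "(i, j) \<in> cells tau \<Longrightarrow> (i, Suc j) \<in> cells tau \<Longrightarrow> T i j \<le> T i (Suc j)"
  and entry_column_less: "(i, j) \<in> cells tau \<Longrightarrow> (Suc i, j) \<in> cells tau \<Longrightarrow> T i j < T (Suc i) j"
  using tableau unfolding SStd_def by auto

lemma entry_row_mono:
  assumes "(i, j) \<in> cells tau" "(i, j') \<in> cells tau" "j \<le> j'"
  shows "T i j \<le> T i j'"
proof -
  have "(i, n) \<in> cells tau \<longrightarrow> T i j \<le> T i n" if "j \<le> n" for n
    using that
  proof (induction n rule: dec_induct)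
    case (step n)
    show ?case
    proof
      assume next_cell: "(i, Suc n) \<in> cells tau"
      moreover have "(i, n) \<in> cells tau"
        using cells_row_left[OF next_cell] step.hyps(1) assms(1) by (simp add: mem_cells_iff)
      ultimately show "T i j \<le> T i (Suc n)" using step.IH entry_row_le by (meson le_trans)
    qed
  qed simp
  then show ?thesis using assms by blast
qed

lemma row_le_entry: "(i, j) \<in> cells tau \<Longrightarrow> i \<le> T i j"
proof (induction i)
  case (Suc i)
  show ?case
  proof (cases "i = 0")
    case False
    then have "(i, j) \<in> cells tau" using cells_column_up[OF Suc.prems] by simp
    then show ?thesis using Suc.IH entry_column_less[OF _ Suc.prems] by fastforce
  qed (use entry_pos[OF Suc.prems] in simp)
qed simp

lemma entry_le_length: "(i, j) \<in> cells tau \<Longrightarrow> T i j \<le> l"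
proof (rule ccontr)
  assume cell: "(i, j) \<in> cells tau" and "\<not> T i j \<le> l"
  then have "card {(i', j') \<in> cells tau. T i' j' = T i j} = 0"
    using entry_count[of "T i j"] entry_pos[OF cell] unfolding pad_def by simp
  moreover have "finite {(i', j') \<in> cells tau. T i' j' = T i j}"
    using finite_cells by (rule finite_subset[rotated]) auto
  ultimately show False using cell by auto
qed

lemma entry_le_iff_subshape:
  assumes cell: "(i, j) \<in> cells tau"
  shows "T i j \<le> k \<longleftrightarrow> j \<le> subshape tau T k i"
proof
  assume le: "T i j \<le> k"
  have "{1..j} \<subseteq> {j'. (i, j') \<in> cells tau \<and> T i j' \<le> k}"
  proof
    fix j' assume j': "j' \<in> {1..j}"
    then have cell': "(i, j') \<in> cells tau" using cells_row_left[OF cell] by auto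
    then have "T i j' \<le> T i j" using entry_row_mono[OF cell' cell] j' by auto
    then show "j' \<in> {j'. (i, j') \<in> cells tau \<and> T i j' \<le> k}" using cell' le by auto
  qed
  then have "card {1..j} \<le> subshape tau T k i"
    unfolding subshape_def by (intro card_mono finite_cells_row)
  then show "j \<le> subshape tau T k i" by simp
next
  assume j: "j \<le> subshape tau T k i"
  show "T i j \<le> k"
  proof (rule ccontr)
    assume "\<not> T i j \<le> k"
    then have "{j'. (i, j') \<in> cells tau \<and> T i j' \<le> k} \<subseteq> {1..<j}"
      using entry_row_mono[OF cell] by (force simp: mem_cells_iff)
    then have "subshape tau T k i \<le> card {1..<j}" unfolding subshape_def by (intro card_mono) auto
    then show False using j cell mem_cells_iff by auto
  qed
qed

lemma subshape_vanishes: "i = 0 \<or> k < i \<Longrightarrow> subshape tau T k i = 0"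
  using row_le_entry unfolding subshape_def by (force simp: mem_cells_iff)

lemma subshape_top: "l \<le> k \<Longrightarrow> subshape tau T k = P"
proof
  fix i assume "l \<le> k"
  then have "{j. (i, j) \<in> cells tau \<and> T i j \<le> k} = {j. (i, j) \<in> cells tau}"
    using entry_le_length le_trans by blast
  also have "\<dots> = {1..P i}" by (auto simp: mem_cells_iff pad_def)
  finally show "subshape tau T k i = P i" unfolding subshape_def by simp
qed

lemma subshape_0: "subshape tau T 0 i = 0"
proof -
  have "{j. (i, j) \<in> cells tau \<and> T i j \<le> 0} = {}" using entry_pos by fastforce
  then show ?thesis unfolding subshape_def by (metis card.empty)
qed

text \<open>The entries \<open>1\<close> fill the first row from the left.\<close>

lemma subshape_1: "subshape tau T 1 = first_row_shape mu"
proof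
  fix i
  show "subshape tau T 1 i = first_row_shape mu i"
  proof (cases "i = 1")
    case True
    have "{(i, j) \<in> cells tau. T i j = 1} = (\<lambda>j. (1, j)) ` {j. (1, j) \<in> cells tau \<and> T 1 j \<le> 1}"
      using row_le_entry entry_pos by (force simp: mem_cells_iff le_antisym)
    then have "card {(i, j) \<in> cells tau. T i j = 1} = card {j. (1, j) \<in> cells tau \<and> T 1 j \<le> 1}"
      by (simp add: card_image inj_on_def)
    then show ?thesis using entry_count[of 1] True unfolding subshape_def first_row_shape_def by simp
  next
    case False
    then have "i = 0 \<or> 1 < i" by linarith
    then show ?thesis using False subshape_vanishes by (simp add: first_row_shape_def)
  qed
qed

lemma subshape_horizontal_strip:
  assumes "1 \<le> k"
  shows "horizontal_strip k (subshape tau T (k - 1)) (pad mu k) (subshape tau T k)"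
  unfolding horizontal_strip_def
proof (intro conjI allI impI)
  fix i
  show "i = 0 \<or> k < i \<Longrightarrow> subshape tau T k i = subshape tau T (k - 1) i"
    using subshape_vanishes[of i k] subshape_vanishes[of i "k - 1"] by auto
  show "1 \<le> i \<and> i \<le> k \<Longrightarrow> subshape tau T (k - 1) i \<le> subshape tau T k i"
    unfolding subshape_def by (intro card_mono finite_cells_row) auto
  assume i: "2 \<le> i \<and> i \<le> k"
  have "{j. (i, j) \<in> cells tau \<and> T i j \<le> k} \<subseteq> {j. (i - 1, j) \<in> cells tau \<and> T (i - 1) j \<le> k - 1}"
  proof
    fix j assume j: "j \<in> {j. (i, j) \<in> cells tau \<and> T i j \<le> k}"
    have "Suc (i - 1) = i" using i by simp
    then have cell: "(Suc (i - 1), j) \<in> cells tau" using j by simp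
    moreover have "1 \<le> i - 1" using i by linarith
    ultimately have cell': "(i - 1, j) \<in> cells tau" by (rule cells_column_up)
    then show "j \<in> {j. (i - 1, j) \<in> cells tau \<and> T (i - 1) j \<le> k - 1}"
      using entry_column_less[OF cell' cell] j \<open>Suc (i - 1) = i\<close> by auto
  qed
  then show "subshape tau T k i \<le> subshape tau T (k - 1) (i - 1)"
    unfolding subshape_def by (intro card_mono finite_cells_row)
next
  show "(\<Sum>i=1..k. subshape tau T k i - subshape tau T (k - 1) i) = pad mu k"
    using card_entries_eq_sum_subshape[OF row_le_entry assms] entry_count[OF assms] by simp
qed

lemma subshapes_in_strip_chains: "subshapes T \<in> tableau_chains"
proof -
  have shapes: "(first_row_shape mu # subshapes T) ! k = subshape tau T (Suc k)" if "k \<le> l - 1" for k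
    using that subshape_1 by (cases k) (auto simp: nth_Cons' simp del: upt_Suc)
  have "horizontal_strip (2 + k) ((first_row_shape mu # subshapes T) ! k) (pad mu (2 + k)) (subshapes T ! k)"
    if "k < l - 1" for k
    using that shapes[of k] subshape_horizontal_strip[of "2 + k"] by (simp add: numeral_2_eq_2 del: upt_Suc)
  moreover have "last (first_row_shape mu # subshapes T) = (first_row_shape mu # subshapes T) ! (l - 1)"
    by (simp add: last_conv_nth del: upt_Suc)
  then have "last (first_row_shape mu # subshapes T) = P"
    using shapes[of "l - 1"] subshape_top[of "Suc (l - 1)"] by simp
  ultimately show ?thesis unfolding strip_chains_iff by (simp del: upt_Suc)
qed

end

lemma subshapes_inj:
  assumes tableau: "T \<in> SStd tau mu" and tableau': "T' \<in> SStd tau mu"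
    and subshapes: "subshapes T = subshapes T'"
  shows "T = T'"
proof -
  have same: "subshape tau T k = subshape tau T' k" for k
  proof -
    consider "k = 0" | "k = 1" | "2 \<le> k" "k \<le> l" | "l < k" by linarith
    then show ?thesis
    proof cases
      case 3
      then have "Suc (Suc (k - 2)) = k" by simp
      with 3 have "subshapes T ! (k - 2) = subshape tau T k" "subshapes T' ! (k - 2) = subshape tau T' k"
        by (simp_all del: upt_Suc)
      then show ?thesis using subshapes by metis
    qed (use subshape_0[OF tableau] subshape_0[OF tableau'] subshape_1[OF tableau] subshape_1[OF tableau']
           subshape_top[OF tableau] subshape_top[OF tableau'] in \<open>simp_all add: fun_eq_iff\<close>)
  qed
  show ?thesis
  proof (intro ext)
    fix i j
    show "T i j = T' i j"
    proof (cases "(i, j) \<in> cells tau")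
      case True
      then show ?thesis
        using entry_le_iff_subshape[OF tableau True] entry_le_iff_subshape[OF tableau' True] same
        by (metis le_antisym order_refl)
    qed (simp add: entry_outside[OF tableau] entry_outside[OF tableau'])
  qed
qed

context
  fixes ch assumes chain: "ch \<in> tableau_chains"
begin

abbreviation "shape \<equiv> chain_shape mu tau ch"

lemma length_chain: "length ch = l - 1"
  using chain unfolding strip_chains_iff by (simp del: upt_Suc)

lemma chain_shape_top: "l \<le> k \<Longrightarrow> 1 \<le> k \<Longrightarrow> shape k = P"
proof (cases "k = Suc (length ch)")
  case True
  then have "shape k = last (first_row_shape mu # ch)" unfolding chain_shape_def by (simp add: last_conv_nth)
  also have "\<dots> = P" using chain unfolding strip_chains_iff by simp
  finally show ?thesis .
next
  case False
  assume "l \<le> k" "1 \<le> k"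
  then show ?thesis using False length_chain unfolding chain_shape_def by auto
qed

lemma chain_shape_strip:
  assumes "1 \<le> k"
  shows "horizontal_strip k (shape (k - 1)) (pad mu k) (shape k)"
proof -
  consider "k = 1" | "2 \<le> k" "k \<le> l" | "l < k" "2 \<le> k" using assms by linarith
  then show ?thesis
  proof cases
    case 1
    then show ?thesis unfolding horizontal_strip_def chain_shape_def by (simp add: first_row_shape_def)
  next
    case 2
    then have "horizontal_strip (2 + (k - 2)) ((first_row_shape mu # ch) ! (k - 2))
        (map (pad mu) [2..<Suc l] ! (k - 2)) (ch ! (k - 2))"
      using chain length_chain unfolding strip_chains_iff by (simp del: upt_Suc)
    moreover have "(first_row_shape mu # ch) ! (k - 2) = shape (k - 1)" "ch ! (k - 2) = shape k"
      using 2 length_chain unfolding chain_shape_def by (auto simp: nth_Cons' numeral_2_eq_2 numeral_3_eq_3)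
    moreover have "Suc (Suc (k - 2)) = k" using 2 by simp
    ultimately show ?thesis using 2 by (simp del: upt_Suc)
  next
    case 3
    then have "shape (k - 1) = P" "shape k = P" "pad mu k = 0"
      using chain_shape_top unfolding pad_def by auto
    then show ?thesis using horizontal_strip_zero_iff[OF is_part_fun_pad[OF tau_sorted]] by simp
  qed
qed

lemma chain_shape_mono: "k \<le> k' \<Longrightarrow> shape k i \<le> shape k' i"
  using lift_Suc_mono_le[of "\<lambda>k. shape k i"] horizontal_strip_grows[OF chain_shape_strip] by fastforce

lemma chain_shape_vanishes: "i = 0 \<or> k < i \<Longrightarrow> shape k i = 0"
proof (induction k)
  case 0
  then show ?case unfolding chain_shape_def by simp
next
  case (Suc k)
  then show ?case using horizontal_stripD(1)[OF chain_shape_strip[of "Suc k"], of i] by auto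
qed

lemma chain_shape_le_top: "shape k i \<le> P i"
  using chain_shape_mono[of k "max k (Suc l)" i] chain_shape_top[of "max k (Suc l)"] by simp

definition chain_tableau :: "nat \<Rightarrow> nat \<Rightarrow> nat" where
  "chain_tableau i j = (if (i, j) \<in> cells tau then (LEAST k. j \<le> shape k i) else 0)"

lemma chain_tableau_le_iff:
  assumes cell: "(i, j) \<in> cells tau"
  shows "chain_tableau i j \<le> k \<longleftrightarrow> j \<le> shape k i"
proof -
  have least: "chain_tableau i j = (LEAST k. j \<le> shape k i)" using cell unfolding chain_tableau_def by simp
  have "j \<le> shape (Suc l) i" using chain_shape_top[of "Suc l"] cell mem_cells_iff by simp
  then have "j \<le> shape (chain_tableau i j) i" unfolding least by (rule LeastI)
  then show ?thesis unfolding least using chain_shape_mono by (meson Least_le le_trans)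
qed

lemma row_le_chain_tableau:
  assumes cell: "(i, j) \<in> cells tau"
  shows "i \<le> chain_tableau i j"
proof (rule ccontr)
  assume "\<not> i \<le> chain_tableau i j"
  then have "shape (chain_tableau i j) i = 0" using chain_shape_vanishes by simp
  moreover have "j \<le> shape (chain_tableau i j) i" using chain_tableau_le_iff[OF cell, of "chain_tableau i j"] by simp
  ultimately show False using cell by (simp add: mem_cells_iff)
qed

lemma subshape_chain_tableau: "subshape tau chain_tableau k i = shape k i"
proof -
  have "{j. (i, j) \<in> cells tau \<and> chain_tableau i j \<le> k} = (if i = 0 then {} else {1..shape k i})"
    using chain_tableau_le_iff chain_shape_le_top[of k i] by (auto simp: mem_cells_iff)
  then show ?thesis unfolding subshape_def using chain_shape_vanishes[of 0 k] by simp
qed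

lemma chain_tableau_column_less:
  assumes cell: "(i, j) \<in> cells tau" and below: "(Suc i, j) \<in> cells tau"
  shows "chain_tableau i j < chain_tableau (Suc i) j"
proof -
  let ?k = "chain_tableau (Suc i) j"
  have "Suc i \<le> ?k" "1 \<le> i" using row_le_chain_tableau[OF below] cell by (auto simp: mem_cells_iff)
  then have "shape ?k (Suc i) \<le> shape (?k - 1) i"
    using horizontal_stripD(3)[OF chain_shape_strip[of ?k], of "Suc i"] by simp
  moreover have "j \<le> shape ?k (Suc i)" using chain_tableau_le_iff[OF below, of ?k] by simp
  ultimately have "chain_tableau i j \<le> ?k - 1" using chain_tableau_le_iff[OF cell, of "?k - 1"] by simp
  then show ?thesis using \<open>Suc i \<le> ?k\<close> by simp
qed

lemma chain_tableau_SStd: "chain_tableau \<in> SStd tau mu"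
  unfolding SStd_def
proof (intro CollectI conjI allI impI ballI)
  fix i j
  show "(i, j) \<notin> cells tau \<Longrightarrow> chain_tableau i j = 0" unfolding chain_tableau_def by simp
  show "(i, j) \<in> cells tau \<and> (Suc i, j) \<in> cells tau \<Longrightarrow> chain_tableau i j < chain_tableau (Suc i) j"
    using chain_tableau_column_less by blast
  assume cells: "(i, j) \<in> cells tau \<and> (i, Suc j) \<in> cells tau"
  then have "Suc j \<le> shape (chain_tableau i (Suc j)) i"
    using chain_tableau_le_iff[of i "Suc j" "chain_tableau i (Suc j)"] by simp
  then show "chain_tableau i j \<le> chain_tableau i (Suc j)"
    using chain_tableau_le_iff[of i j "chain_tableau i (Suc j)"] cells by simp
next
  fix x assume "x \<in> cells tau"
  then show "case x of (i, j) \<Rightarrow> 1 \<le> chain_tableau i j"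
    using row_le_chain_tableau by (auto simp: mem_cells_iff intro: le_trans)
next
  fix k :: nat assume "1 \<le> k"
  then show "card {(i, j) \<in> cells tau. chain_tableau i j = k} = pad mu k"
    using card_entries_eq_sum_subshape[OF row_le_chain_tableau] horizontal_stripD(4)[OF chain_shape_strip]
    by (simp add: subshape_chain_tableau)
qed

lemma subshapes_chain_tableau: "subshapes chain_tableau = ch"
proof (rule nth_equalityI)
  fix q assume "q < length (subshapes chain_tableau)"
  then have "q < length ch" using length_chain by (simp del: upt_Suc)
  then show "subshapes chain_tableau ! q = ch ! q"
    using length_chain subshape_chain_tableau unfolding chain_shape_def by (simp add: fun_eq_iff del: upt_Suc)
qed (simp add: length_chain del: upt_Suc)

end

lemma bij_betw_SStd_strip_chains: "bij_betw subshapes (SStd tau mu) tableau_chains"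
proof (rule bij_betw_imageI)
  show "inj_on subshapes (SStd tau mu)" using subshapes_inj by (auto intro: inj_onI)
  show "subshapes ` SStd tau mu = tableau_chains"
  proof
    show "tableau_chains \<subseteq> subshapes ` SStd tau mu"
    proof
      fix ch assume chain: "ch \<in> tableau_chains"
      show "ch \<in> subshapes ` SStd tau mu"
        by (rule rev_image_eqI[OF chain_tableau_SStd[OF chain]]) (rule subshapes_chain_tableau[OF chain, symmetric])
    qed
  qed (use subshapes_in_strip_chains in auto)
qed

end

lemma root_label_eq: "root_label mu = Some (first_row_shape mu, pad mu)"
  unfolding root_label_def normalize_def by (auto simp: fun_eq_iff first_row_shape_def pad_def)

lemma valid_root_label: "valid_label mu (first_row_shape mu) (pad mu)"
  unfolding valid_label_def is_part_fun_def by (auto simp: first_row_shape_def pad_def)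

lemma label_chains_root:
  "label_chains mu P (root_label mu) = strip_chains P (first_row_shape mu) 2 (map (pad mu) [2..<Suc (length mu)])"
proof -
  have "strip_weights (length mu) (first_row_shape mu) (pad mu) 2 = map (pad mu) [2..<Suc (length mu)]"
    unfolding strip_weights_def by (intro map_cong) (auto simp: first_row_shape_def)
  then show ?thesis unfolding root_label_eq label_chains_def by simp
qed

lemma terminal_vertices_labelled_eq:
  "terminal_vertices_labelled mu tau = terminal_paths mu (pad tau) (root_label mu)"
  unfolding terminal_vertices_labelled_def terminal_vertices_def tree_vertices_def terminal_paths_def tree_label_def
  using not_internal_diagonal_label by auto

theorem lemma6p18:
  fixes s :: nat and mu tau :: "nat list"
  assumes "is_partition_of s mu" and "is_partition_of s tau"
  shows "\<exists>f. bij_betw f (terminal_vertices_labelled mu tau) (SStd tau mu)"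
proof -
  interpret tableau_shape tau mu
    using assms(2) by unfold_locales (simp add: is_partition_of_def)
  let ?chains = "strip_chains (pad tau) (first_row_shape mu) 2 (map (pad mu) [2..<Suc (length mu)])"
  have paths: "finite (terminal_paths mu (pad tau) (root_label mu))"
    "card (terminal_paths mu (pad tau) (root_label mu)) = card ?chains"
    using card_terminal_paths[of mu "root_label mu" "pad tau"] valid_root_label
    by (simp_all add: root_label_eq label_chains_root[unfolded root_label_eq])
  have tableaux: "bij_betw (\<lambda>T. map (subshape tau T) [2..<Suc (length mu)]) (SStd tau mu) ?chains"
    by (rule bij_betw_SStd_strip_chains)
  then have "finite (SStd tau mu)" using bij_betw_finite finite_strip_chains by blast
  moreover have "card (SStd tau mu) = card ?chains" using bij_betw_same_card[OF tableaux] .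
  ultimately show ?thesis
    unfolding terminal_vertices_labelled_eq using paths by (intro finite_same_card_bij) simp_all
qed

end
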